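(* Let $(\varphi_t)_{t\ge0}$ be a family of nonnegative measures on $\mathcal B(\mathbb R_+)$ satisfying $$\forall t\ge0,\ \forall A\in\mathcal B(\mathbb R_+),\ \forall\varepsilon>0,\ \exists\eta\in(0,1):\ |z|,|z'|<\eta\Rightarrow|\varphi_{t+z}(A+z')-\varphi_t(A+z')|<\varepsilon .$$ Then: (1) for almost every $t\ge0$ and all $0\le s<r$, $$\lim_{\Delta t\searrow0}\frac1{\Delta t}\int_0^{\Delta t}\big|\varphi_{t+\Delta t-u}((s+u,r+u])-\varphi_t((s+u,r+u])\big|\,du=0;$$ (2) for almost every $t\ge0$ and all $0\le s<r$, $$\lim_{\Delta t\searrow0}\frac1{\Delta t}\int_0^{\Delta t}\varphi_{t+\Delta t-u}((s+u,r+u])\,du=\varphi_t((s,r]).$$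
   Context: $A+z'$ denotes the translate $\{a+z':a\in A\}$. *)

theory Defs
  imports "HOL-Analysis.Analysis"
begin

abbreviation borel_nonneg :: "real measure" where
  "borel_nonneg \<equiv> restrict_space borel {0..}"

definition translate :: "real set \<Rightarrow> real \<Rightarrow> real set" where
  "translate A z' = (\<lambda>a. a + z') ` A"

end

theory Submission
  imports Defs
begin

(* The conclusions hold for every t >= 0, not only almost everywhere. For 0 < u < Delta t the
   hypothesis, applied with z = Delta t - u and z' = u, makes the integrand of (1) uniformly small
   once Delta t is small, hence also its average. For (2) one adds that phi_t((s+u, r+u]) tends to
   phi_t((s, r]) as u decreases to 0, by continuity from above of the finite measure phi_t. The
   only measure-theoretic point is the integrability of u |-> phi_(t+Delta t-u)((s+u, r+u]): by the
   same two facts it is right-continuous, hence Borel measurable, and it is bounded. *)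

lemma tendsto_at_right_0_realI:
  fixes F :: "real \<Rightarrow> real"
  assumes "\<And>e. 0 < e \<Longrightarrow> \<exists>\<eta>>0. \<forall>d. 0 < d \<and> d < \<eta> \<longrightarrow> \<bar>F d - c\<bar> \<le> e"
  shows "(F \<longlongrightarrow> c) (at_right 0)"
  unfolding tendsto_iff eventually_at_right_field dist_real_def
proof (intro allI impI)
  fix e :: real assume "0 < e"
  then obtain \<eta> where "0 < \<eta>" "\<forall>d. 0 < d \<and> d < \<eta> \<longrightarrow> \<bar>F d - c\<bar> \<le> e / 2"
    using assms[of "e / 2"] by auto
  with \<open>0 < e\<close> show "\<exists>b>0. \<forall>d>0. d < b \<longrightarrow> \<bar>F d - c\<bar> < e"
    by (intro exI[of _ \<eta>]) force
qed

lemma Ioc_in_sets_borel_nonneg: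
  assumes "sets M = sets borel_nonneg" "0 \<le> a"
  shows "{a<..b} \<in> sets M"
proof -
  have "{a<..b} = {0..} \<inter> {a<..b}" using assms(2) by auto
  then show ?thesis using assms(1) by (simp add: sets_restrict_space)
qed

lemma measure_Ioc_right_continuous:
  fixes a c :: real
  assumes M: "finite_measure M" and sets: "\<And>x. {a<..x} \<in> sets M"
  shows "continuous (at_right c) (\<lambda>x. measure M {a<..x})"
  unfolding continuous_within
proof (rule tendsto_at_right_sequentially[where b="c + 1"])
  fix f :: "nat \<Rightarrow> real" assume f: "\<And>n. c < f n" "decseq f" "f \<longlonglongrightarrow> c"
  have "(\<lambda>n. measure M {a<..f n}) \<longlonglongrightarrow> measure M (\<Inter>n. {a<..f n})"
    using f(2) sets
    by (intro finite_measure.finite_Lim_measure_decseq[OF M]) (auto simp: decseq_def, meson order.trans)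
  also have "(\<Inter>n. {a<..f n}) = {a<..c}"
  proof (intro equalityI subsetI)
    fix x assume "x \<in> (\<Inter>n. {a<..f n})"
    then have "a < x" "\<And>n. x \<le> f n" by auto
    moreover have "x \<le> c" using LIMSEQ_le_const[OF f(3)] \<open>\<And>n. x \<le> f n\<close> by blast
    ultimately show "x \<in> {a<..c}" by simp
  next
    fix x assume "x \<in> {a<..c}"
    then show "x \<in> (\<Inter>n. {a<..f n})" using f(1) by (auto intro: less_imp_le order.strict_trans1)
  qed
  finally show "(\<lambda>n. measure M {a<..f n}) \<longlonglongrightarrow> measure M {a<..c}" .
qed simp

lemma measure_Ioc_shift_tendsto:
  fixes a b :: real
  assumes M: "finite_measure M" and sets: "\<And>x. {a<..x} \<in> sets M" and "a \<le> b"
  shows "((\<lambda>v. measure M {a+v<..b+v}) \<longlongrightarrow> measure M {a<..b}) (at_right 0)"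
proof -
  have "((\<lambda>v. measure M {a<..v + c}) \<longlongrightarrow> measure M {a<..c}) (at_right 0)" for c
  proof -
    have "((\<lambda>x. measure M {a<..x}) \<longlongrightarrow> measure M {a<..c}) (at_right c)"
      using measure_Ioc_right_continuous[OF assms(1,2), of c] by (simp add: continuous_within)
    then show ?thesis
      by (simp add: at_right_to_0[of c] tendsto_compose_filtermap[symmetric] comp_def)
  qed
  from tendsto_diff[OF this[of b] this[of a]]
  have "((\<lambda>v. measure M {a<..v + b} - measure M {a<..v + a}) \<longlongrightarrow> measure M {a<..b}) (at_right 0)"
    by simp
  moreover have "measure M {a<..v + b} - measure M {a<..v + a} = measure M {a+v<..b+v}" if "0 < v" for v
  proof -
    have "{a<..v + b} - {a<..v + a} = {a+v<..b+v}" using that \<open>a \<le> b\<close> by auto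
    moreover have "{a<..v + a} \<subseteq> {a<..v + b}" using \<open>a \<le> b\<close> by auto
    ultimately show ?thesis
      using finite_measure.finite_measure_Diff[OF M sets sets] by (metis add.commute)
  qed
  ultimately show ?thesis
    by (rule Lim_transform_eventually[OF _ eventually_at_rightI[of 0 1]]) auto
qed

lemma einterval_0_ereal [simp]: "einterval 0 (ereal d) = {0<..<d}"
  by (metis einterval_eq_Icc zero_ereal_def)

lemma interval_average_dist_le:
  fixes f :: "real \<Rightarrow> real"
  assumes d: "0 < d" and f: "interval_lebesgue_integrable lborel 0 d f"
    and bound: "\<And>u. 0 < u \<Longrightarrow> u < d \<Longrightarrow> \<bar>f u - c\<bar> \<le> e"
  shows "\<bar>(1/d) * (LBINT u=0..d. f u) - c\<bar> \<le> e"
proof -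
  have LBINT_eq: "(LBINT u=0..d. g u) = (LINT u:{0<..<d}|lborel. g u)" for g
    using d by (simp add: interval_lebesgue_integral_def)
  have int_const: "set_integrable lborel {0<..<d} (\<lambda>_. a)" for a :: real
    using interval_integral_const(1)[of 0 d a] d
    by (simp add: interval_lebesgue_integrable_def)
  have integral_const: "(LINT u:{0<..<d}|lborel. a) = a * d" for a :: real
    using d by (subst set_integral_const) auto
  have int_f: "set_integrable lborel {0<..<d} f"
    using f d by (simp add: interval_lebesgue_integrable_def)
  then have int_diff: "set_integrable lborel {0<..<d} (\<lambda>u. f u - c)"
    using int_const by auto
  have "\<bar>(LBINT u=0..d. f u) - c * d\<bar> = \<bar>LINT u:{0<..<d}|lborel. f u - c\<bar>"
    using int_f int_const by (simp add: LBINT_eq set_integral_diff integral_const)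
  also have "\<dots> \<le> (LINT u:{0<..<d}|lborel. \<bar>f u - c\<bar>)"
    using set_integral_norm_bound[OF int_diff] by simp
  also have "\<dots> \<le> (LINT u:{0<..<d}|lborel. e)"
    using int_diff int_const bound by (intro set_integral_mono) (auto intro: set_integrable_abs)
  also have "\<dots> = e * d"
    by (rule integral_const)
  finally have "\<bar>(LBINT u=0..d. f u) - c * d\<bar> \<le> e * d" .
  moreover have "(1/d) * (LBINT u=0..d. f u) - c = ((LBINT u=0..d. f u) - c * d) / d"
    using d by (simp add: field_simps)
  ultimately show ?thesis
    using d by (simp add: abs_divide pos_divide_le_eq)
qed

lemma abs_interval_average_le:
  fixes f :: "real \<Rightarrow> real"
  assumes d: "0 < d" and e: "0 \<le> e" and bound: "\<And>u. 0 < u \<Longrightarrow> u < d \<Longrightarrow> \<bar>f u\<bar> \<le> e"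
  shows "\<bar>(1/d) * (LBINT u=0..d. f u)\<bar> \<le> e"
proof (cases "interval_lebesgue_integrable lborel 0 d f")
  case True
  then show ?thesis using interval_average_dist_le[OF d True, of 0 e] bound by simp
next
  case False
  \<comment> \<open>No integrability is needed: a non-integrable function has integral 0.\<close>
  then have "(LBINT u=0..d. f u) = 0"
    using d by (simp add: interval_lebesgue_integral_def interval_lebesgue_integrable_def
        set_lebesgue_integral_def set_integrable_def not_integrable_integral_eq)
  then show ?thesis using e by simp
qed

lemma set_borel_measurable_right_continuous:
  fixes h :: "real \<Rightarrow> real"
  assumes S: "S \<in> sets borel" and h: "\<And>u. u \<in> S \<Longrightarrow> continuous (at_right u) h"
  shows "set_borel_measurable borel S h"
  unfolding set_borel_measurable_def
proof (rule borel_measurable_LIMSEQ_real)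
  \<comment> \<open>Sampling h at grid points to the right of u makes each approximant a countable-valued
    measurable choice of measurable functions, and right-continuity gives convergence.\<close>
  define grid where "grid n u = real_of_int \<lceil>real (Suc n) * u\<rceil> / real (Suc n)" for n u
  show "(\<lambda>u. indicator S u *\<^sub>R h (grid n u)) \<in> borel_measurable borel" for n
  proof -
    have "(\<lambda>u. indicator S u *\<^sub>R h (real_of_int k / real (Suc n))) \<in> borel_measurable borel"
      for k :: int
      by (intro borel_measurable_scaleR borel_measurable_indicator S measurable_const) simp
    moreover have "(\<lambda>u. \<lceil>real (Suc n) * u\<rceil>) \<in> measurable borel (count_space UNIV)"
      by measurable
    ultimately show ?thesis
      unfolding grid_def
      by (rule measurable_compose_countable'[where
            f="\<lambda>k u. indicator S u *\<^sub>R h (real_of_int k / real (Suc n))"]) simp_all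
  qed
  show "(\<lambda>n. indicator S u *\<^sub>R h (grid n u)) \<longlonglongrightarrow> indicator S u *\<^sub>R h u" for u
  proof (cases "u \<in> S")
    case True
    have grid_ge: "grid n u \<in> {u..}" and grid_le: "grid n u \<le> u + 1 / real (Suc n)" for n
    proof -
      have "real (Suc n) * u \<le> real_of_int \<lceil>real (Suc n) * u\<rceil>"
        and ceil_le: "real_of_int \<lceil>real (Suc n) * u\<rceil> \<le> real (Suc n) * u + 1"
        by linarith+
      then show "grid n u \<in> {u..}"
        by (simp add: grid_def pos_le_divide_eq mult.commute)
      have "grid n u \<le> (real (Suc n) * u + 1) / real (Suc n)"
        unfolding grid_def using ceil_le by (intro divide_right_mono) auto
      also have "\<dots> = u + 1 / real (Suc n)"
        by (simp add: add_divide_distrib)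
      finally show "grid n u \<le> u + 1 / real (Suc n)" .
    qed
    have upper_lim: "(\<lambda>n. u + 1 / real (Suc n)) \<longlonglongrightarrow> u"
      using tendsto_add[OF tendsto_const LIMSEQ_Suc[OF lim_1_over_n]] by simp
    have grid_lim: "(\<lambda>n. grid n u) \<longlonglongrightarrow> u"
    proof (rule tendsto_sandwich[OF _ _ tendsto_const upper_lim])
      show "\<forall>\<^sub>F n in sequentially. u \<le> grid n u" using grid_ge by simp
      show "\<forall>\<^sub>F n in sequentially. grid n u \<le> u + 1 / real (Suc n)" using grid_le by simp
    qed
    have "continuous (at u within {u..}) h"
      using h[OF True] by (simp add: at_within_Ici_at_right)
    from continuous_within_tendsto_compose'[OF this grid_ge grid_lim] True
    show ?thesis by simp
  qed simp
qed

lemma interval_integrable_bounded: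
  fixes f :: "real \<Rightarrow> real"
  assumes "0 \<le> d" and meas: "set_borel_measurable borel {0<..<d} f"
    and bound: "\<And>u. 0 < u \<Longrightarrow> u < d \<Longrightarrow> \<bar>f u\<bar> \<le> B"
  shows "interval_lebesgue_integrable lborel 0 d f"
proof -
  have "integrable lborel (\<lambda>u. indicator {0<..<d} u * f u)"
  proof (rule integrableI_bounded_set[where A="{0<..<d}" and B=B])
    show "(\<lambda>u. indicator {0<..<d} u * f u) \<in> borel_measurable lborel"
      using meas by (simp add: set_borel_measurable_def)
    show "AE u in lborel. u \<in> {0<..<d} \<longrightarrow> norm (indicator {0<..<d} u * f u) \<le> B"
      using bound by auto
  qed (use \<open>0 \<le> d\<close> in auto)
  then show ?thesis
    using \<open>0 \<le> d\<close> by (simp add: interval_lebesgue_integrable_def set_integrable_def)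
qed

lemma translate_Ioc: "translate {a<..b} z = {a+z<..b+z}"
  by (simp add: translate_def add.commute[of _ z])

context
  fixes \<phi> :: "real \<Rightarrow> real measure"
  assumes meas: "\<And>t. t \<ge> 0 \<Longrightarrow> sets (\<phi> t) = sets borel_nonneg"
    and fin: "\<And>t. t \<ge> 0 \<Longrightarrow> finite_measure (\<phi> t)"
    and cont: "\<And>t A \<epsilon>. t \<ge> 0 \<Longrightarrow> A \<in> sets borel_nonneg \<Longrightarrow> \<epsilon> > 0 \<Longrightarrow>
      \<exists>\<eta>. 0 < \<eta> \<and> \<eta> < 1 \<and>
        (\<forall>z z'. \<bar>z\<bar> < \<eta> \<and> \<bar>z'\<bar> < \<eta> \<and> t + z \<ge> 0 \<longrightarrow>
           \<bar>measure (\<phi> (t + z)) (translate A z' \<inter> {0..})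
             - measure (\<phi> t) (translate A z' \<inter> {0..})\<bar> < \<epsilon>)"
begin

lemma measure_shifted_Ioc_close:
  assumes t: "0 \<le> t" and s: "0 \<le> s" and e: "0 < e"
  obtains \<eta> where "0 < \<eta>"
    and "\<And>z w. \<bar>z\<bar> < \<eta> \<Longrightarrow> 0 \<le> w \<Longrightarrow> w < \<eta> \<Longrightarrow> 0 \<le> t + z \<Longrightarrow>
      \<bar>measure (\<phi> (t + z)) {s+w<..r+w} - measure (\<phi> t) {s+w<..r+w}\<bar> < e"
proof -
  have "{s<..r} \<in> sets borel_nonneg"
    using s by (intro Ioc_in_sets_borel_nonneg) simp_all
  from cont[OF t this e] obtain \<eta> where "0 < \<eta>"
    and close: "\<And>z w. \<bar>z\<bar> < \<eta> \<Longrightarrow> \<bar>w\<bar> < \<eta> \<Longrightarrow> t + z \<ge> 0 \<Longrightarrow>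
      \<bar>measure (\<phi> (t + z)) (translate {s<..r} w \<inter> {0..})
        - measure (\<phi> t) (translate {s<..r} w \<inter> {0..})\<bar> < e"
    by blast
  moreover have "translate {s<..r} w \<inter> {0..} = {s+w<..r+w}" if "0 \<le> w" for w
    using s that by (auto simp: translate_Ioc)
  ultimately show ?thesis
    using that by (metis abs_of_nonneg)
qed

lemma average_deviation_tendsto_0:
  assumes t: "0 \<le> t" and s: "0 \<le> s"
  shows "((\<lambda>d. (1 / d) * (LBINT u=0..d.
            \<bar>measure (\<phi> (t + d - u)) {s + u<..r + u} - measure (\<phi> t) {s + u<..r + u}\<bar>))
          \<longlongrightarrow> 0) (at_right 0)"
proof (rule tendsto_at_right_0_realI)
  fix e :: real assume "0 < e"
  then obtain \<eta> where "0 < \<eta>" and close: "\<And>z w. \<bar>z\<bar> < \<eta> \<Longrightarrow> 0 \<le> w \<Longrightarrow> w < \<eta> \<Longrightarrow> 0 \<le> t + z \<Longrightarrow>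
      \<bar>measure (\<phi> (t + z)) {s+w<..r+w} - measure (\<phi> t) {s+w<..r+w}\<bar> < e"
    using measure_shifted_Ioc_close[OF t s] by blast
  show "\<exists>\<eta>>0. \<forall>d. 0 < d \<and> d < \<eta> \<longrightarrow> \<bar>(1 / d) * (LBINT u=0..d.
      \<bar>measure (\<phi> (t + d - u)) {s + u<..r + u} - measure (\<phi> t) {s + u<..r + u}\<bar>) - 0\<bar> \<le> e"
  proof (intro exI[of _ \<eta>] conjI allI impI)
    fix d assume d: "0 < d \<and> d < \<eta>"
    show "\<bar>(1 / d) * (LBINT u=0..d.
      \<bar>measure (\<phi> (t + d - u)) {s + u<..r + u} - measure (\<phi> t) {s + u<..r + u}\<bar>) - 0\<bar> \<le> e"
      unfolding diff_zero
    proof (rule abs_interval_average_le)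
      fix u assume "0 < u" "u < d"
      then show "\<bar>\<bar>measure (\<phi> (t + d - u)) {s + u<..r + u} - measure (\<phi> t) {s + u<..r + u}\<bar>\<bar> \<le> e"
        using close[of "d - u" u] d t by (simp add: add_diff_eq)
    qed (use d \<open>0 < e\<close> in auto)
  qed (rule \<open>0 < \<eta>\<close>)
qed

lemma continuous_at_right_measure_moving_Ioc:
  assumes u: "u < c" and su: "0 \<le> s + u" and sr: "s \<le> r"
  shows "continuous (at_right u) (\<lambda>v. measure (\<phi> (c - v)) {s + v<..r + v})"
proof -
  define t where "t = c - u"
  have t: "0 \<le> t" using u by (simp add: t_def)
  have close: "((\<lambda>v. measure (\<phi> (c - v)) {s + v<..r + v} - measure (\<phi> t) {s + v<..r + v})
      \<longlongrightarrow> 0) (at_right u)"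
    unfolding tendsto_iff dist_real_def diff_0_right
  proof (intro allI impI)
    fix e :: real assume "0 < e"
    then obtain \<eta> where "0 < \<eta>" and close: "\<And>z w. \<bar>z\<bar> < \<eta> \<Longrightarrow> 0 \<le> w \<Longrightarrow> w < \<eta> \<Longrightarrow> 0 \<le> t + z \<Longrightarrow>
        \<bar>measure (\<phi> (t + z)) {(s+u)+w<..(r+u)+w} - measure (\<phi> t) {(s+u)+w<..(r+u)+w}\<bar> < e"
      using measure_shifted_Ioc_close[OF t su] by blast
    have "\<bar>measure (\<phi> (c - v)) {s + v<..r + v} - measure (\<phi> t) {s + v<..r + v}\<bar> < e"
      if "u < v" "v < u + min \<eta> (c - u)" for v
      using close[of "u - v" "v - u"] that by (simp add: t_def algebra_simps)
    then show "\<forall>\<^sub>F v in at_right u.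
        \<bar>measure (\<phi> (c - v)) {s + v<..r + v} - measure (\<phi> t) {s + v<..r + v}\<bar> < e"
      unfolding eventually_at_right_field using \<open>0 < \<eta>\<close> u by (intro exI[of _ "u + min \<eta> (c - u)"]) auto
  qed
  have "((\<lambda>w. measure (\<phi> t) {(s+u)+w<..(r+u)+w}) \<longlongrightarrow> measure (\<phi> t) {s+u<..r+u}) (at_right 0)"
    using su sr by (intro measure_Ioc_shift_tendsto fin[OF t] Ioc_in_sets_borel_nonneg meas[OF t]) auto
  then have shift: "((\<lambda>v. measure (\<phi> t) {s + v<..r + v}) \<longlongrightarrow> measure (\<phi> t) {s+u<..r+u}) (at_right u)"
    by (simp add: at_right_to_0[of u] tendsto_compose_filtermap[symmetric] comp_def algebra_simps)
  from tendsto_add[OF close shift] show ?thesis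
    by (simp add: continuous_within t_def)
qed

lemma average_tendsto_measure_Ioc:
  assumes t: "0 \<le> t" and s: "0 \<le> s" and sr: "s \<le> r"
  shows "((\<lambda>d. (1 / d) * (LBINT u=0..d. measure (\<phi> (t + d - u)) {s + u<..r + u}))
          \<longlongrightarrow> measure (\<phi> t) {s<..r}) (at_right 0)"
proof (rule tendsto_at_right_0_realI)
  fix e :: real assume "0 < e"
  then obtain \<eta>1 where "0 < \<eta>1" and close: "\<And>z w. \<bar>z\<bar> < \<eta>1 \<Longrightarrow> 0 \<le> w \<Longrightarrow> w < \<eta>1 \<Longrightarrow> 0 \<le> t + z \<Longrightarrow>
      \<bar>measure (\<phi> (t + z)) {s+w<..r+w} - measure (\<phi> t) {s+w<..r+w}\<bar> < e / 2"
    using measure_shifted_Ioc_close[OF t s, of "e / 2"] by auto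
  have "((\<lambda>v. measure (\<phi> t) {s+v<..r+v}) \<longlongrightarrow> measure (\<phi> t) {s<..r}) (at_right 0)"
    using s sr by (intro measure_Ioc_shift_tendsto fin[OF t] Ioc_in_sets_borel_nonneg meas[OF t])
  then have "\<forall>\<^sub>F v in at_right 0. \<bar>measure (\<phi> t) {s+v<..r+v} - measure (\<phi> t) {s<..r}\<bar> < e / 2"
    using half_gt_zero[OF \<open>0 < e\<close>] unfolding tendsto_iff dist_real_def by blast
  then obtain \<eta>2 where "0 < \<eta>2" and shift: "\<And>v. 0 < v \<Longrightarrow> v < \<eta>2 \<Longrightarrow>
      \<bar>measure (\<phi> t) {s+v<..r+v} - measure (\<phi> t) {s<..r}\<bar> < e / 2"
    by (auto simp: eventually_at_right_field)
  show "\<exists>\<eta>>0. \<forall>d. 0 < d \<and> d < \<eta> \<longrightarrow> \<bar>(1 / d) * (LBINT u=0..d.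
      measure (\<phi> (t + d - u)) {s + u<..r + u}) - measure (\<phi> t) {s<..r}\<bar> \<le> e"
  proof (intro exI[of _ "min \<eta>1 \<eta>2"] conjI allI impI)
    fix d assume d: "0 < d \<and> d < min \<eta>1 \<eta>2"
    define h where "h u = measure (\<phi> (t + d - u)) {s + u<..r + u}" for u
    have bound: "\<bar>h u - measure (\<phi> t) {s<..r}\<bar> \<le> e" if "0 < u" "u < d" for u
    proof -
      have "\<bar>measure (\<phi> (t + d - u)) {s+u<..r+u} - measure (\<phi> t) {s+u<..r+u}\<bar> < e / 2"
        using close[of "d - u" u] that d t by (simp add: add_diff_eq)
      moreover have "\<bar>measure (\<phi> t) {s+u<..r+u} - measure (\<phi> t) {s<..r}\<bar> < e / 2"
        using shift[of u] that d by simp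
      ultimately show ?thesis
        unfolding h_def by linarith
    qed
    have "set_borel_measurable borel {0<..<d} h"
      unfolding h_def using t s sr
      by (intro set_borel_measurable_right_continuous continuous_at_right_measure_moving_Ioc) auto
    then have "interval_lebesgue_integrable lborel 0 d h"
    proof (rule interval_integrable_bounded[rotated])
      fix u assume "0 < u" "u < d"
      with bound[of u] show "\<bar>h u\<bar> \<le> \<bar>measure (\<phi> t) {s<..r}\<bar> + e"
        by linarith
    qed (use d in simp)
    from interval_average_dist_le[OF _ this bound] d
    show "\<bar>(1 / d) * (LBINT u=0..d.
        measure (\<phi> (t + d - u)) {s + u<..r + u}) - measure (\<phi> t) {s<..r}\<bar> \<le> e"
      by (simp add: h_def)
  qed (use \<open>0 < \<eta>1\<close> \<open>0 < \<eta>2\<close> in simp)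
qed

end

theorem propositionA1:
  fixes \<phi> :: "real \<Rightarrow> real measure"
  assumes meas: "\<And>t. t \<ge> 0 \<Longrightarrow> sets (\<phi> t) = sets borel_nonneg"
    and fin: "\<And>t. t \<ge> 0 \<Longrightarrow> finite_measure (\<phi> t)"
    and cont: "\<And>t A \<epsilon>. t \<ge> 0 \<Longrightarrow> A \<in> sets borel_nonneg \<Longrightarrow> \<epsilon> > 0 \<Longrightarrow>
      \<exists>\<eta>. 0 < \<eta> \<and> \<eta> < 1 \<and>
        (\<forall>z z'. \<bar>z\<bar> < \<eta> \<and> \<bar>z'\<bar> < \<eta> \<and> t + z \<ge> 0 \<longrightarrow>
           \<bar>measure (\<phi> (t + z)) (translate A z' \<inter> {0..})
             - measure (\<phi> t) (translate A z' \<inter> {0..})\<bar> < \<epsilon>)"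
  shows "(AE t in lborel. t \<ge> 0 \<longrightarrow> (\<forall>s r. 0 \<le> s \<and> s < r \<longrightarrow>
            ((\<lambda>d. (1 / d) * (LBINT u=0..d.
                \<bar>measure (\<phi> (t + d - u)) {s + u<..r + u} - measure (\<phi> t) {s + u<..r + u}\<bar>))
              \<longlongrightarrow> 0) (at_right 0)))
       \<and> (AE t in lborel. t \<ge> 0 \<longrightarrow> (\<forall>s r. 0 \<le> s \<and> s < r \<longrightarrow>
            ((\<lambda>d. (1 / d) * (LBINT u=0..d. measure (\<phi> (t + d - u)) {s + u<..r + u}))
              \<longlongrightarrow> measure (\<phi> t) {s<..r}) (at_right 0)))"
proof (intro conjI AE_I2 impI allI; elim conjE)
  fix t s r :: real assume "0 \<le> t" "0 \<le> s" "s < r"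
  then show "((\<lambda>d. (1 / d) * (LBINT u=0..d.
                \<bar>measure (\<phi> (t + d - u)) {s + u<..r + u} - measure (\<phi> t) {s + u<..r + u}\<bar>))
              \<longlongrightarrow> 0) (at_right 0)"
    and "((\<lambda>d. (1 / d) * (LBINT u=0..d. measure (\<phi> (t + d - u)) {s + u<..r + u}))
              \<longlongrightarrow> measure (\<phi> t) {s<..r}) (at_right 0)"
    by (intro average_deviation_tendsto_0[OF meas fin cont] average_tendsto_measure_Ioc[OF meas fin cont];
        simp)+
qed

end
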